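(* Let $\ell\in\mathcal{D}^-[0,\infty)$, $r\in\mathcal{D}^+[0,\infty)$ with $\ell\le r$. Given any $\psi\in\mathcal{D}[0,\infty)$, there exists at most one $\phi\in\mathcal{D}[0,\infty)$ such that $(\phi,\phi-\psi)$ solves the ESP on $[\ell(\cdot),r(\cdot)]$ for $\psi$.
   Context: $\mathcal{D}[0,\infty)$ denotes the càdlàg functions $[0,\infty)\to(-\infty,\infty)$; $\mathcal{D}^-[0,\infty)$ (resp. $\mathcal{D}^+[0,\infty)$) denotes càdlàg functions with values in $[-\infty,\infty)$ (resp. $(-\infty,\infty]$). ESP: $(\phi,\eta)\in\mathcal{D}[0,\infty)^2$ solves the ESP on $[\ell(\cdot),r(\cdot)]$ for $\psi$ if (1) $\phi(t)=\psi(t)+\eta(t)\in[\ell(t),r(t)]$ for all $t\ge0$; (2) for all $0\le s\le t$: $\eta(t)-\eta(s)\ge0$ if $\phi(u)<r(u)$ for all $u\in(s,t]$, and $\eta(t)-\eta(s)\le0$ if $\phi(u)>\ell(u)$ for all $u\in(s,t]$; (3) for all $t\ge0$: $\eta(t)-\eta(t-)\ge0$ if $\phi(t)<r(t)$, and $\eta(t)-\eta(t-)\le0$ if $\phi(t)>\ell(t)$, where $\eta(0-)=0$. *)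

theory Defs
  imports "HOL-Analysis.Analysis" "HOL-Library.Extended_Real"
begin

text \<open>Cadlag on [0,oo): right-continuous at every t >= 0, left limit exists at every t > 0.
  Values outside [0,oo) are irrelevant.\<close>
definition cadlag :: "(real \<Rightarrow> 'a::topological_space) \<Rightarrow> bool" where
  "cadlag f \<longleftrightarrow> (\<forall>t\<ge>0. continuous (at_right t) f \<and> (t > 0 \<longrightarrow> (\<exists>L. (f \<longlongrightarrow> L) (at_left t))))"

definition D :: "(real \<Rightarrow> real) set" where
  "D = {f. cadlag f}"

definition Dminus :: "(real \<Rightarrow> ereal) set" where
  "Dminus = {f. cadlag f \<and> (\<forall>t\<ge>0. f t \<noteq> \<infinity>)}"

definition Dplus :: "(real \<Rightarrow> ereal) set" where
  "Dplus = {f. cadlag f \<and> (\<forall>t\<ge>0. f t \<noteq> -\<infinity>)}"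

text \<open>Left limit eta(t-), with the convention eta(0-) = 0.\<close>
definition left_lim :: "(real \<Rightarrow> real) \<Rightarrow> real \<Rightarrow> real" where
  "left_lim \<eta> t = (if t = 0 then 0 else Lim (at_left t) \<eta>)"

definition ESP :: "(real \<Rightarrow> ereal) \<Rightarrow> (real \<Rightarrow> ereal) \<Rightarrow> (real \<Rightarrow> real)
    \<Rightarrow> (real \<Rightarrow> real) \<Rightarrow> (real \<Rightarrow> real) \<Rightarrow> bool" where
  "ESP l r \<psi> \<phi> \<eta> \<longleftrightarrow>
     \<phi> \<in> D \<and> \<eta> \<in> D \<and>
     (\<forall>t\<ge>0. \<phi> t = \<psi> t + \<eta> t \<and> l t \<le> ereal (\<phi> t) \<and> ereal (\<phi> t) \<le> r t) \<and>
     (\<forall>s t. 0 \<le> s \<and> s \<le> t \<longrightarrow>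
        ((\<forall>u\<in>{s<..t}. ereal (\<phi> u) < r u) \<longrightarrow> \<eta> t - \<eta> s \<ge> 0) \<and>
        ((\<forall>u\<in>{s<..t}. ereal (\<phi> u) > l u) \<longrightarrow> \<eta> t - \<eta> s \<le> 0)) \<and>
     (\<forall>t\<ge>0.
        (ereal (\<phi> t) < r t \<longrightarrow> \<eta> t - left_lim \<eta> t \<ge> 0) \<and>
        (ereal (\<phi> t) > l t \<longrightarrow> \<eta> t - left_lim \<eta> t \<le> 0))"

end

theory Submission
  imports Defs
begin

text \<open>Suppose \<open>\<phi>\<^sub>1 > \<phi>\<^sub>2\<close> at some time \<open>T\<close>. Wherever \<open>\<phi>\<^sub>1 > \<phi>\<^sub>2\<close>, the first solution is off the
  lower barrier and the second off the upper one, so \<open>\<eta>\<^sub>1\<close> can only decrease and \<open>\<eta>\<^sub>2\<close> only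
  increase there; as \<open>\<phi>\<^sub>1 - \<phi>\<^sub>2 = \<eta>\<^sub>1 - \<eta>\<^sub>2\<close>, the gap can only grow when going backwards in time,
  also across jumps and hence into left limits. Running this backwards from \<open>T\<close> down to time 0
  yields a positive gap at 0, although \<open>\<eta>\<^sub>1(0) \<le> 0 \<le> \<eta>\<^sub>2(0)\<close> by the jump condition at 0.
  Neither the regularity of the barriers nor \<open>l \<le> r\<close> enters the argument.\<close>

lemma real_interval_backward_induct:
  fixes P :: "real \<Rightarrow> bool" and T :: real
  assumes "0 \<le> T"
    and step: "\<And>s. 0 \<le> s \<Longrightarrow> s \<le> T \<Longrightarrow> \<forall>u\<in>{s<..T}. P u \<Longrightarrow>
                 P s \<and> (0 < s \<longrightarrow> (\<exists>b<s. \<forall>u\<in>{b<..<s}. P u))"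
  shows "\<forall>u\<in>{0..T}. P u"
proof -
  define A where "A = {s. 0 \<le> s \<and> s \<le> T \<and> (\<forall>u\<in>{s<..T}. P u)}"
  define s where "s = Inf A"
  have "T \<in> A" using \<open>0 \<le> T\<close> by (auto simp: A_def)
  have bdd: "bdd_below A" by (rule bdd_belowI[of _ 0]) (auto simp: A_def)
  have "0 \<le> s" unfolding s_def using \<open>T \<in> A\<close> by (intro cInf_greatest) (auto simp: A_def)
  have "s \<le> T" unfolding s_def using \<open>T \<in> A\<close> bdd by (rule cInf_lower)
  have above: "\<forall>u\<in>{s<..T}. P u"
  proof
    fix u assume u: "u \<in> {s<..T}"
    then obtain a where "a \<in> A" "a < u" using cInf_lessD[of A u] \<open>T \<in> A\<close> by (auto simp: s_def)
    then show "P u" using u by (auto simp: A_def)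
  qed
  have "P s" using step[OF \<open>0 \<le> s\<close> \<open>s \<le> T\<close> above] by blast
  have "s = 0"
  proof (rule ccontr)
    assume "s \<noteq> 0"
    then obtain b where "b < s" and below: "\<forall>u\<in>{b<..<s}. P u"
      using step[OF \<open>0 \<le> s\<close> \<open>s \<le> T\<close> above] \<open>0 \<le> s\<close> by auto
    have "\<forall>u\<in>{max b 0<..T}. P u"
    proof
      fix u assume "u \<in> {max b 0<..T}"
      then consider "u \<in> {b<..<s}" | "u = s" | "u \<in> {s<..T}" by fastforce
      then show "P u" using below \<open>P s\<close> above by cases auto
    qed
    then have "max b 0 \<in> A" using \<open>b < s\<close> \<open>s \<le> T\<close> \<open>0 \<le> T\<close> by (auto simp: A_def)
    then have "s \<le> max b 0" unfolding s_def using bdd by (rule cInf_lower)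
    with \<open>b < s\<close> \<open>0 \<le> s\<close> \<open>s \<noteq> 0\<close> show False by linarith
  qed
  then show ?thesis using \<open>P s\<close> above by (auto simp: le_less)
qed

lemma left_lim_tendsto:
  assumes "\<eta> \<in> D" and "0 < t"
  shows "(\<eta> \<longlongrightarrow> left_lim \<eta> t) (at_left t)"
proof -
  have "\<exists>L. (\<eta> \<longlongrightarrow> L) (at_left t)"
    using assms unfolding D_def cadlag_def by (simp add: less_imp_le)
  then obtain L where "(\<eta> \<longlongrightarrow> L) (at_left t)" ..
  then show ?thesis using \<open>0 < t\<close> by (simp add: left_lim_def tendsto_Lim)
qed

lemma ESP_decomposition: "ESP l r \<psi> \<phi> \<eta> \<Longrightarrow> 0 \<le> t \<Longrightarrow> \<phi> t = \<psi> t + \<eta> t"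
  and ESP_lower_bound: "ESP l r \<psi> \<phi> \<eta> \<Longrightarrow> 0 \<le> t \<Longrightarrow> l t \<le> ereal (\<phi> t)"
  and ESP_upper_bound: "ESP l r \<psi> \<phi> \<eta> \<Longrightarrow> 0 \<le> t \<Longrightarrow> ereal (\<phi> t) \<le> r t"
  and ESP_regulator_mono:
    "ESP l r \<psi> \<phi> \<eta> \<Longrightarrow> 0 \<le> s \<Longrightarrow> s \<le> t \<Longrightarrow> \<forall>u\<in>{s<..t}. ereal (\<phi> u) < r u \<Longrightarrow> \<eta> s \<le> \<eta> t"
  and ESP_regulator_antimono:
    "ESP l r \<psi> \<phi> \<eta> \<Longrightarrow> 0 \<le> s \<Longrightarrow> s \<le> t \<Longrightarrow> \<forall>u\<in>{s<..t}. l u < ereal (\<phi> u) \<Longrightarrow> \<eta> t \<le> \<eta> s"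
  and ESP_jump_nonneg: "ESP l r \<psi> \<phi> \<eta> \<Longrightarrow> 0 \<le> t \<Longrightarrow> ereal (\<phi> t) < r t \<Longrightarrow> left_lim \<eta> t \<le> \<eta> t"
  and ESP_jump_nonpos: "ESP l r \<psi> \<phi> \<eta> \<Longrightarrow> 0 \<le> t \<Longrightarrow> l t < ereal (\<phi> t) \<Longrightarrow> \<eta> t \<le> left_lim \<eta> t"
  unfolding ESP_def by force+

context
  fixes l r :: "real \<Rightarrow> ereal" and \<psi> \<phi>\<^sub>1 \<phi>\<^sub>2 \<eta>\<^sub>1 \<eta>\<^sub>2 :: "real \<Rightarrow> real"
  assumes ESP\<^sub>1: "ESP l r \<psi> \<phi>\<^sub>1 \<eta>\<^sub>1" and ESP\<^sub>2: "ESP l r \<psi> \<phi>\<^sub>2 \<eta>\<^sub>2"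
begin

lemma ESP_gap_eq_regulator_gap: "0 \<le> t \<Longrightarrow> \<phi>\<^sub>1 t - \<phi>\<^sub>2 t = \<eta>\<^sub>1 t - \<eta>\<^sub>2 t"
  using ESP_decomposition[OF ESP\<^sub>1] ESP_decomposition[OF ESP\<^sub>2] by simp

lemma ESP_gap_off_barriers:
  assumes "0 \<le> u" and "\<phi>\<^sub>2 u < \<phi>\<^sub>1 u"
  shows "l u < ereal (\<phi>\<^sub>1 u)" and "ereal (\<phi>\<^sub>2 u) < r u"
proof -
  have "ereal (\<phi>\<^sub>2 u) < ereal (\<phi>\<^sub>1 u)" using assms(2) by simp
  then show "l u < ereal (\<phi>\<^sub>1 u)" and "ereal (\<phi>\<^sub>2 u) < r u"
    using ESP_lower_bound[OF ESP\<^sub>2 \<open>0 \<le> u\<close>] ESP_upper_bound[OF ESP\<^sub>1 \<open>0 \<le> u\<close>] by order+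
qed

lemma ESP_gap_grows_backward:
  assumes "0 \<le> s" and "s \<le> t" and gap: "\<forall>u\<in>{s<..t}. \<phi>\<^sub>2 u < \<phi>\<^sub>1 u"
  shows "\<phi>\<^sub>1 t - \<phi>\<^sub>2 t \<le> \<phi>\<^sub>1 s - \<phi>\<^sub>2 s"
proof -
  have "\<eta>\<^sub>1 t \<le> \<eta>\<^sub>1 s"
    using ESP_regulator_antimono[OF ESP\<^sub>1 assms(1,2)] ESP_gap_off_barriers(1) gap assms(1) by force
  moreover have "\<eta>\<^sub>2 s \<le> \<eta>\<^sub>2 t"
    using ESP_regulator_mono[OF ESP\<^sub>2 assms(1,2)] ESP_gap_off_barriers(2) gap assms(1) by force
  ultimately show ?thesis using ESP_gap_eq_regulator_gap assms(1,2) by force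
qed

lemma ESP_gap_le_left_lim_gap:
  assumes "0 \<le> s" and "\<phi>\<^sub>2 s < \<phi>\<^sub>1 s"
  shows "\<phi>\<^sub>1 s - \<phi>\<^sub>2 s \<le> left_lim \<eta>\<^sub>1 s - left_lim \<eta>\<^sub>2 s"
  using ESP_jump_nonpos[OF ESP\<^sub>1 \<open>0 \<le> s\<close> ESP_gap_off_barriers(1)[OF assms]]
    ESP_jump_nonneg[OF ESP\<^sub>2 \<open>0 \<le> s\<close> ESP_gap_off_barriers(2)[OF assms]]
    ESP_gap_eq_regulator_gap[OF \<open>0 \<le> s\<close>] by linarith

lemma ESP_gap_persists_left:
  assumes "0 < s" and "\<phi>\<^sub>2 s < \<phi>\<^sub>1 s"
  obtains b where "b < s" and "\<forall>u\<in>{b<..<s}. \<phi>\<^sub>2 u < \<phi>\<^sub>1 u"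
proof -
  have "((\<lambda>u. \<eta>\<^sub>1 u - \<eta>\<^sub>2 u) \<longlongrightarrow> left_lim \<eta>\<^sub>1 s - left_lim \<eta>\<^sub>2 s) (at_left s)"
    using ESP\<^sub>1 ESP\<^sub>2 \<open>0 < s\<close> by (intro tendsto_diff left_lim_tendsto) (auto simp: ESP_def)
  moreover have "0 < left_lim \<eta>\<^sub>1 s - left_lim \<eta>\<^sub>2 s"
    using ESP_gap_le_left_lim_gap[of s] assms by linarith
  ultimately have "eventually (\<lambda>u. 0 < \<eta>\<^sub>1 u - \<eta>\<^sub>2 u) (at_left s)"
    by (rule order_tendstoD)
  then obtain b where "b < s" and pos: "\<forall>u>b. u < s \<longrightarrow> 0 < \<eta>\<^sub>1 u - \<eta>\<^sub>2 u"
    unfolding eventually_at_left_field by blast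
  show ?thesis
  proof
    show "max b 0 < s" using \<open>b < s\<close> \<open>0 < s\<close> by simp
    show "\<forall>u\<in>{max b 0<..<s}. \<phi>\<^sub>2 u < \<phi>\<^sub>1 u"
    proof
      fix u assume "u \<in> {max b 0<..<s}"
      then have "0 < \<eta>\<^sub>1 u - \<eta>\<^sub>2 u" using pos by simp
      then show "\<phi>\<^sub>2 u < \<phi>\<^sub>1 u"
        using ESP_gap_eq_regulator_gap[of u] \<open>u \<in> {max b 0<..<s}\<close> by simp
    qed
  qed
qed

lemma ESP_comparison:
  assumes "0 \<le> T"
  shows "\<phi>\<^sub>1 T \<le> \<phi>\<^sub>2 T"
proof (rule ccontr)
  assume "\<not> \<phi>\<^sub>1 T \<le> \<phi>\<^sub>2 T"
  have "\<forall>u\<in>{0..T}. \<phi>\<^sub>2 u < \<phi>\<^sub>1 u"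
  proof (rule real_interval_backward_induct[OF \<open>0 \<le> T\<close>])
    fix s assume "0 \<le> s" "s \<le> T" and gap: "\<forall>u\<in>{s<..T}. \<phi>\<^sub>2 u < \<phi>\<^sub>1 u"
    have "\<phi>\<^sub>2 s < \<phi>\<^sub>1 s"
      using ESP_gap_grows_backward[OF \<open>0 \<le> s\<close> \<open>s \<le> T\<close> gap] \<open>\<not> \<phi>\<^sub>1 T \<le> \<phi>\<^sub>2 T\<close> by linarith
    then show "\<phi>\<^sub>2 s < \<phi>\<^sub>1 s \<and> (0 < s \<longrightarrow> (\<exists>b<s. \<forall>u\<in>{b<..<s}. \<phi>\<^sub>2 u < \<phi>\<^sub>1 u))"
      using ESP_gap_persists_left by metis
  qed
  then have "\<phi>\<^sub>2 0 < \<phi>\<^sub>1 0" using \<open>0 \<le> T\<close> by simp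
  with ESP_gap_le_left_lim_gap[of 0] show False by (simp add: left_lim_def)
qed

end

theorem proposition2p8:
  fixes l r :: "real \<Rightarrow> ereal" and \<psi> \<phi>1 \<phi>2 :: "real \<Rightarrow> real"
  assumes "l \<in> Dminus" and "r \<in> Dplus" and "\<forall>t\<ge>0. l t \<le> r t"
    and "\<psi> \<in> D"
    and "\<phi>1 \<in> D" and "ESP l r \<psi> \<phi>1 (\<lambda>t. \<phi>1 t - \<psi> t)"
    and "\<phi>2 \<in> D" and "ESP l r \<psi> \<phi>2 (\<lambda>t. \<phi>2 t - \<psi> t)"
  shows "\<forall>t\<ge>0. \<phi>1 t = \<phi>2 t"
  using ESP_comparison[OF assms(6,8)] ESP_comparison[OF assms(8,6)] by (meson order_antisym)

end
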